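(* Let $n\ge4$ be even, $p\ge n+1$ an integer, $c_1$ a positive integer, $a_k=pc_k$, $c_{k+1}=p^2c_k$, and let $T$, $I^{(k)}_i$, $b_{k,i}$ and the measures $\lambda_j$ be as in the context. Then for $i\ne j$ and every $k\ge1$, $$\lambda_j(I_i^{(k)})\le\frac{1}{b_{k,i}}.$$
   Context: $\pi$ is the permutation of $\{1,\dots,n\}$ with top row $1,2,\dots,n$ and bottom row $n,3,2,5,4,\dots,n-1,n-2,1$. Right Rauzy induction: step "0" when the rightmost domain (top) interval is longer, "1" when the rightmost image (bottom) interval is longer. For $a,c>0$, $\dot\gamma_{m,a}=1^{n-1-m}0^a10^2$, $\gamma_{a,c}=0\,\dot\gamma_{n-2,a}\cdots\dot\gamma_{2,a}\,1^{c(n-1)}$; its transition matrix $\Theta_{a,c}$ (old lengths $=\Theta_{a,c}\cdot$new lengths) has row $1=(1,c,\dots,c)$, row $n=(1,c+1,\dots,c+1)$, and for $1\le i\le(n-2)/2$: row $2i$ has $0$ in column 1, $2$ in columns $2i,2i+1$, $1$ in the other columns among $2,\dots,n$; row $2i+1$ has $a$ in column $2i$, $a+1$ in column $2i+1$, $0$ elsewhere. $\Theta_k=\Theta_{a_k,c_k}$. $T$ is an IET of $[0,1)$ with permutation $\pi$ whose right Rauzy induction path is $\gamma_{a_1,c_1}\gamma_{a_2,c_2}\cdots$; $I^{(k)}$ is the interval on which the induced map lives after the first $k$ blocks and $I^{(k)}_1,\dots,I^{(k)}_n$ its exchanged subintervals. $b_{k,i}=|\Theta_1\cdots\Theta_ke_i|$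 (sum of entries), the first return time of $I^{(k)}_i$ to $I^{(k)}$. For $v\ge0$, $\overline v=v/|v|$. $\lambda_j$ ($1\le j\le n$) denotes the $T$-invariant Borel probability measure such that for every $k\ge0$, $(\lambda_j(I^{(k)}_t))_t$ is a positive multiple of $\lim_{m\to\infty}\overline{\Theta_{k+1}\cdots\Theta_me_j}$. *)

theory Defs
  imports "HOL-Probability.Probability"
begin

(* Letters (labels of the exchanged intervals) are the naturals 1..n.
   A Rauzy state is (tp row, bottom row, length vector). *)
type_synonym rstate = "nat list \<times> nat list \<times> (nat \<Rightarrow> real)"

fun ins_after :: "nat \<Rightarrow> nat \<Rightarrow> nat list \<Rightarrow> nat list" where
  "ins_after x y [] = []"
| "ins_after x y (z # zs) = (if z = x then z # y # zs else z # ins_after x y zs)"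

definition rauzy_type :: "rstate \<Rightarrow> nat option" where
  "rauzy_type s = (case s of (tp, bt, lam) \<Rightarrow>
      (let al = last tp; be = last bt in
        if lam be < lam al then Some 0 else if lam al < lam be then Some 1 else None))"

definition rauzy_step :: "rstate \<Rightarrow> rstate" where
  "rauzy_step s = (case s of (tp, bt, lam) \<Rightarrow>
      (let al = last tp; be = last bt in
        if lam be < lam al then (tp, ins_after al be (butlast bt), lam(al := lam al - lam be))
        else if lam al < lam be then (ins_after be al (butlast tp), bt, lam(be := lam be - lam al))
        else s))"

definition start :: "nat list \<Rightarrow> (nat \<Rightarrow> real) \<Rightarrow> nat \<Rightarrow> real" where
  "start xs lam a = sum_list (map lam (takeWhile (\<lambda>x. x \<noteq> a) xs))"

definition subint :: "rstate \<Rightarrow> nat \<Rightarrow> real set" where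
  "subint s a = (case s of (tp, bt, lam) \<Rightarrow> {start tp lam a ..< start tp lam a + lam a})"

definition iet :: "nat list \<Rightarrow> nat list \<Rightarrow> (nat \<Rightarrow> real) \<Rightarrow> real \<Rightarrow> real" where
  "iet tp bt lam x = x + (\<Sum>a\<in>set tp. indicator (subint (tp, bt, lam) a) x
                                   * (start bt lam a - start tp lam a))"

definition pi_top :: "nat \<Rightarrow> nat list" where
  "pi_top n = [1..<n+1]"
definition pi_bot :: "nat \<Rightarrow> nat list" where
  "pi_bot n = n # concat (map (\<lambda>i. [2*i+1, 2*i]) [1..<n div 2]) @ [1]"

definition gdot :: "nat \<Rightarrow> nat \<Rightarrow> nat \<Rightarrow> nat list" where
  "gdot n m a = replicate (n - 1 - m) 1 @ replicate a 0 @ [1, 0, 0]"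
definition gamma :: "nat \<Rightarrow> nat \<Rightarrow> nat \<Rightarrow> nat list" where
  "gamma n a c = [0] @ concat (map (\<lambda>i. gdot n (n - 2*i) a) [1..<n div 2]) @ replicate (c * (n - 1)) 1"

definition nsteps :: "nat \<Rightarrow> (nat \<Rightarrow> nat) \<Rightarrow> (nat \<Rightarrow> nat) \<Rightarrow> nat \<Rightarrow> nat" where
  "nsteps n a c k = (\<Sum>l=1..k. length (gamma n (a l) (c l)))"

(* the matrix Theta_{a,c}, entries indexed by 1..n *)
definition Theta :: "nat \<Rightarrow> nat \<Rightarrow> nat \<Rightarrow> nat \<Rightarrow> nat \<Rightarrow> real" where
  "Theta n a c r s =
     (if r = 1 then (if s = 1 then 1 else real c)
      else if r = n then (if s = 1 then 1 else real c + 1)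
      else if even r then (if s = 1 then 0 else if s = r \<or> s = r + 1 then 2 else 1)
      else (if s = r - 1 then real a else if s = r then real a + 1 else 0))"

definition matmul :: "nat \<Rightarrow> (nat \<Rightarrow> nat \<Rightarrow> real) \<Rightarrow> (nat \<Rightarrow> nat \<Rightarrow> real) \<Rightarrow> nat \<Rightarrow> nat \<Rightarrow> real" where
  "matmul n A B r s = (\<Sum>l=1..n. A r l * B l s)"

definition idmat :: "nat \<Rightarrow> nat \<Rightarrow> real" where
  "idmat r s = (if r = s then 1 else 0)"

(* thprod n f k m = f (k+1) * f (k+2) * ... * f m  (identity if m \<le> k) *)
fun thprod :: "nat \<Rightarrow> (nat \<Rightarrow> nat \<Rightarrow> nat \<Rightarrow> real) \<Rightarrow> nat \<Rightarrow> nat \<Rightarrow> nat \<Rightarrow> nat \<Rightarrow> real" where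
  "thprod n f k 0 = idmat"
| "thprod n f k (Suc m) = (if Suc m \<le> k then idmat else matmul n (thprod n f k m) (f (Suc m)))"

end

theory Submission
  imports Defs
begin

text \<open>After N Rauzy steps every letter t of the induced map carries a Rokhlin tower for T: the
  floors T^q I_t, q < h_t, with h_t the return time, are translates of I_t and pairwise disjoint over
  all letters. A right Rauzy step stacks the tower of the shorter last letter on top of the tower of
  the longer one, so towers persist along the induction while the heights follow the Rauzy
  matrices; one block gamma_{a,c} brings the permutation back to pi and multiplies the heights by
  Theta_{a,c}, so after k blocks h_i = b_{k,i}. For any T-invariant probability measure the disjoint
  floors give h_i lambda(I_i) \<le> (\<Sum>t. h_t lambda(I_t)) \<le> 1. Thus the bound holds for every
  invariant measure: neither the choice of p and c_k, nor i \<noteq> j, nor the limit description of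
  lambda_j is needed.\<close>

lemma start_Nil [simp]: "start [] lam a = 0"
  by (simp add: start_def)

lemma start_Cons [simp]: "start (y # ys) lam a = (if y = a then 0 else lam y + start ys lam a)"
  by (simp add: start_def)

lemma start_nonneg: "(\<And>x. x \<in> set xs \<Longrightarrow> lam x \<ge> 0) \<Longrightarrow> start xs lam a \<ge> 0"
  by (induction xs) auto

lemma start_add_le_sum_list:
  "(\<And>x. x \<in> set xs \<Longrightarrow> lam x \<ge> 0) \<Longrightarrow> a \<in> set xs \<Longrightarrow>
   start xs lam a + lam a \<le> sum_list (map lam xs)"
  by (induction xs) (auto intro!: sum_list_nonneg)

lemma start_snoc: "a \<in> set xs \<Longrightarrow> start (xs @ [w]) lam a = start xs lam a"
  by (induction xs) auto

lemma start_cong: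
  "(\<And>x. x \<in> set xs \<Longrightarrow> lam' x = lam x) \<Longrightarrow> a \<in> set xs \<Longrightarrow> start xs lam' a = start xs lam a"
  by (induction xs) auto

lemma start_snoc_fun_upd:
  "distinct (xs @ [w]) \<Longrightarrow> a \<in> set (xs @ [w]) \<Longrightarrow>
   start (xs @ [w]) (lam(w := v)) a = start (xs @ [w]) lam a"
  by (induction xs) auto

lemma set_ins_after: "x \<in> set xs \<Longrightarrow> set (ins_after x z xs) = insert z (set xs)"
  by (induction xs) auto

lemma ins_after_append: "x \<notin> set xs \<Longrightarrow> ins_after x z (xs @ x # ys) = xs @ x # z # ys"
  by (induction xs) auto

lemma set_ins_after_subset: "set (ins_after x z xs) \<subseteq> insert z (set xs)"
  by (induction xs) auto

lemma distinct_ins_after: "distinct xs \<Longrightarrow> z \<notin> set xs \<Longrightarrow> distinct (ins_after x z xs)"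
  by (induction xs) (use set_ins_after_subset in fastforce)+

lemma start_ins_after_old:
  "distinct (xs @ [z]) \<Longrightarrow> x \<in> set xs \<Longrightarrow> s \<in> set xs \<Longrightarrow>
   start (ins_after x z xs) (lam(x := lam x - lam z)) s = start xs lam s"
  by (induction xs) (auto intro!: start_cong)

lemma start_ins_after_new:
  "distinct (xs @ [z]) \<Longrightarrow> x \<in> set xs \<Longrightarrow>
   start (ins_after x z xs) (lam(x := lam x - lam z)) z = start xs lam x + lam x - lam z"
  by (induction xs) auto

lemma subint_eq: "subint (tp, bt, lam) a = {start tp lam a ..< start tp lam a + lam a}"
  by (simp add: subint_def)

lemma subint_borel: "subint s a \<in> sets borel"
  by (cases s) (simp add: subint_eq)

lemma start_separated:
  assumes "distinct xs" "a \<in> set xs" "b \<in> set xs" "a \<noteq> b" "\<And>x. x \<in> set xs \<Longrightarrow> lam x \<ge> 0"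
  shows "start xs lam a + lam a \<le> start xs lam b \<or> start xs lam b + lam b \<le> start xs lam a"
  using assms
proof (induction xs)
  case (Cons y ys)
  have "start ys lam d \<ge> 0" for d using Cons.prems by (intro start_nonneg) auto
  with Cons show ?case by (cases "y = a"; cases "y = b") force+
qed simp

lemma subint_disjoint:
  assumes "distinct tp" "a \<in> set tp" "b \<in> set tp" "a \<noteq> b" "\<And>x. x \<in> set tp \<Longrightarrow> lam x \<ge> 0"
  shows "subint (tp, bt, lam) a \<inter> subint (tp, bt, lam) b = {}"
  using start_separated[of tp a b lam] assms by (auto simp: subint_eq)

lemma iet_on_subint:
  assumes "distinct tp" "s \<in> set tp" "\<And>x. x \<in> set tp \<Longrightarrow> lam x \<ge> 0"
    and x: "x \<in> subint (tp, bt, lam) s"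
  shows "iet tp bt lam x = x + (start bt lam s - start tp lam s)"
proof -
  have "x \<notin> subint (tp, bt, lam) a" if "a \<in> set tp - {s}" for a
    using subint_disjoint[of tp a s lam bt] assms that by auto
  then have "(\<Sum>a\<in>set tp - {s}. indicator (subint (tp, bt, lam) a) x * (start bt lam a - start tp lam a)) = 0"
    by (intro sum.neutral) auto
  moreover have "(\<Sum>a\<in>set tp. indicator (subint (tp, bt, lam) a) x * (start bt lam a - start tp lam a))
      = (start bt lam s - start tp lam s)
        + (\<Sum>a\<in>set tp - {s}. indicator (subint (tp, bt, lam) a) x * (start bt lam a - start tp lam a))"
    using assms(2) x by (subst sum.remove) auto
  ultimately show ?thesis by (simp add: iet_def)
qed

text \<open>The translation clause is what makes every floor of the tower a Borel set.\<close>

definition rokhlin_tower ::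
  "(real \<Rightarrow> real) \<Rightarrow> (nat \<Rightarrow> real set) \<Rightarrow> (real \<Rightarrow> real) \<Rightarrow> (nat \<Rightarrow> nat) \<Rightarrow> nat set \<Rightarrow> bool" where
  "rokhlin_tower T I E h L \<longleftrightarrow>
     (\<forall>a\<in>L. \<forall>q \<le> h a. \<exists>d. \<forall>x\<in>I a. (T^^q) x = x + d) \<and>
     (\<forall>a\<in>L. \<forall>x\<in>I a. (T^^h a) x = E x) \<and>
     inj_on (\<lambda>(a, q, x). (T^^q) x) (SIGMA a:L. {..<h a} \<times> I a)"

lemma rokhlin_tower_translation:
  "rokhlin_tower T I E h L \<Longrightarrow> a \<in> L \<Longrightarrow> q \<le> h a \<Longrightarrow> \<exists>d. \<forall>x\<in>I a. (T^^q) x = x + d"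
  unfolding rokhlin_tower_def by simp

lemma rokhlin_tower_return:
  "rokhlin_tower T I E h L \<Longrightarrow> a \<in> L \<Longrightarrow> x \<in> I a \<Longrightarrow> (T^^h a) x = E x"
  unfolding rokhlin_tower_def by simp

lemma rokhlin_tower_injective:
  "rokhlin_tower T I E h L \<Longrightarrow> a \<in> L \<Longrightarrow> a' \<in> L \<Longrightarrow> q < h a \<Longrightarrow> q' < h a' \<Longrightarrow> x \<in> I a \<Longrightarrow> x' \<in> I a' \<Longrightarrow>
   (T^^q) x = (T^^q') x' \<Longrightarrow> a = a' \<and> q = q' \<and> x = x'"
  unfolding rokhlin_tower_def by (auto dest: inj_onD[of _ _ "(a, q, x)" "(a', q', x')"])

lemma funpow_add_apply: "(T^^(p + q)) x = (T^^q) ((T^^p) x)"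
  by (metis add.commute comp_apply funpow_add)

text \<open>The new tower over I' u climbs the old tower over I v and then, through E, the old tower
  over I w; every other base only shrinks.\<close>

locale tower_stacking =
  fixes T :: "real \<Rightarrow> real" and I I' :: "nat \<Rightarrow> real set" and E E' :: "real \<Rightarrow> real"
    and h :: "nat \<Rightarrow> nat" and L :: "nat set" and u v w :: nat
  assumes tower: "rokhlin_tower T I E h L"
    and letters: "u \<in> L" "v \<in> L" "w \<in> L"
    and base_sub: "\<And>a. a \<in> L \<Longrightarrow> a \<noteq> u \<Longrightarrow> I' a \<subseteq> I a"
    and base_sub_u: "I' u \<subseteq> I v"
    and return_u: "E ` I' u \<subseteq> I w"
    and base_disjoint: "\<And>a b. a \<in> L \<Longrightarrow> b \<in> L \<Longrightarrow> a \<noteq> b \<Longrightarrow> I' a \<inter> I' b = {}"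
    and return_disjoint: "\<And>a. a \<in> L \<Longrightarrow> I' a \<inter> E ` I' u = {}"
    and return_new_base: "\<And>a x. a \<in> L \<Longrightarrow> a \<noteq> u \<Longrightarrow> x \<in> I' a \<Longrightarrow> E' x = E x"
    and return_new_base_u: "\<And>x. x \<in> I' u \<Longrightarrow> E' x = E (E x)"
begin

abbreviation "h' \<equiv> h(u := h v + h w)"

lemmas translation = rokhlin_tower_translation[OF tower]
  and return = rokhlin_tower_return[OF tower]
  and injective = rokhlin_tower_injective[OF tower]

lemma funpow_u_upper:
  assumes "x \<in> I' u" "h v \<le> q"
  shows "(T^^q) x = (T^^(q - h v)) (E x)"
  using funpow_add_apply[where T=T and p="h v" and q="q - h v" and x=x] return[OF letters(2)] assms base_sub_u by auto

lemma stacked_translation: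
  assumes a: "a \<in> L" and q: "q \<le> h' a"
  shows "\<exists>d. \<forall>x\<in>I' a. (T^^q) x = x + d"
proof (cases "a = u \<and> h v < q")
  case True
  obtain d1 where d1: "\<forall>x\<in>I v. (T^^h v) x = x + d1" using translation[OF letters(2)] by blast
  have "q - h v \<le> h w" using True q by simp
  then obtain d2 where d2: "\<forall>y\<in>I w. (T^^(q - h v)) y = y + d2"
    using translation[OF letters(3)] by blast
  have "(T^^q) x = x + (d1 + d2)" if x: "x \<in> I' u" for x
  proof -
    have "E x = x + d1" using d1 return[OF letters(2)] base_sub_u x by force
    moreover have "E x \<in> I w" using return_u x by blast
    ultimately show ?thesis using funpow_u_upper[OF x] True d2 by simp
  qed
  with True show ?thesis by blast
next
  case False
  obtain b where b: "b \<in> L" "q \<le> h b" "I' a \<subseteq> I b"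
  proof (cases "a = u")
    case True
    then show ?thesis using that[of v] False q letters base_sub_u by simp
  next
    case False
    then show ?thesis using that[of a] a q base_sub by simp
  qed
  then obtain d where "\<forall>x\<in>I b. (T^^q) x = x + d" using translation by blast
  then show ?thesis using b(3) by blast
qed

lemma stacked_return:
  assumes "a \<in> L" "x \<in> I' a"
  shows "(T^^h' a) x = E' x"
proof (cases "a = u")
  case True
  then have "(T^^h' a) x = (T^^h w) (E x)"
    using funpow_u_upper[of x "h' a"] assms by simp
  also have "\<dots> = E' x" using return[OF letters(3)] return_u return_new_base_u True assms by auto
  finally show ?thesis .
qed (use assms base_sub return return_new_base in auto)

definition lower :: "nat \<Rightarrow> nat \<Rightarrow> real \<Rightarrow> nat \<times> nat \<times> real" where
  "lower a q x = (if a \<noteq> u then (a, q, x) else if q < h v then (v, q, x) else (w, q - h v, E x))"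

lemma lower_floor:
  assumes "a \<in> L" "q < h' a" "x \<in> I' a"
  shows "case lower a q x of (b, p, y) \<Rightarrow> b \<in> L \<and> p < h b \<and> y \<in> I b \<and> (T^^p) y = (T^^q) x"
  using assms letters base_sub base_sub_u return_u funpow_u_upper[of x q]
  by (auto simp: lower_def)

lemma E_inj_on_u: "inj_on E (I' u)"
proof
  fix x y assume xy: "x \<in> I' u" "y \<in> I' u" "E x = E y"
  obtain d where "\<forall>x\<in>I v. (T^^h v) x = x + d" using translation[OF letters(2)] by blast
  then have "E x = x + d" "E y = y + d" using return[OF letters(2)] base_sub_u xy by force+
  with xy show "x = y" by simp
qed

lemma lower_inj:
  assumes "a \<in> L" "a' \<in> L" "x \<in> I' a" "x' \<in> I' a'" "lower a q x = lower a' q' x'"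
  shows "a = a' \<and> q = q' \<and> x = x'"
  using assms base_disjoint[of a a'] return_disjoint[of a] return_disjoint[of a'] letters
    E_inj_on_u[unfolded inj_on_def]
  by (auto simp: lower_def split: if_splits)

lemma stacked: "rokhlin_tower T I' E' h' L"
proof -
  have floor_eq: "a = a' \<and> q = q' \<and> x = x'"
    if floors: "a \<in> L" "a' \<in> L" "q < h' a" "q' < h' a'" "x \<in> I' a" "x' \<in> I' a'"
      and eq: "(T^^q) x = (T^^q') x'" for a a' q q' x x'
  proof -
    obtain b p y b' p' y' where low: "lower a q x = (b, p, y)" "lower a' q' x' = (b', p', y')"
      by (metis prod_cases3)
    have b: "b \<in> L" "p < h b" "y \<in> I b" "(T^^p) y = (T^^q) x"
      using lower_floor[OF floors(1,3,5)] low(1) by simp_all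
    have b': "b' \<in> L" "p' < h b'" "y' \<in> I b'" "(T^^p') y' = (T^^q') x'"
      using lower_floor[OF floors(2,4,6)] low(2) by simp_all
    have "b = b' \<and> p = p' \<and> y = y'"
      using injective[OF b(1) b'(1) b(2) b'(2) b(3) b'(3)] b(4) b'(4) eq by simp
    then have "lower a q x = lower a' q' x'" using low by simp
    then show ?thesis by (rule lower_inj[OF floors(1,2,5,6)])
  qed
  have "inj_on (\<lambda>(a, q, x). (T^^q) x) (SIGMA a:L. {..<h' a} \<times> I' a)"
  proof (rule inj_onI, clarify)
    fix a q x a' q' x'
    assume "(T^^q) x = (T^^q') x'" "a \<in> L" "a' \<in> L" "x \<in> I' a" "q < h' a" "x' \<in> I' a'" "q' < h' a'"
    then show "a = a' \<and> (q, x) = (q', x')" using floor_eq[of a a' q q' x x'] by simp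
  qed
  then show ?thesis using stacked_translation stacked_return by (simp add: rokhlin_tower_def)
qed

end

lemma distr_funpow_invariant:
  assumes T: "T \<in> M \<rightarrow>\<^sub>M M" and inv: "distr M M T = M"
  shows "distr M M (T^^q) = M"
proof (induction q)
  case (Suc q)
  have "distr M M (T^^Suc q) = distr (distr M M (T^^q)) M T"
    by (subst distr_distr[OF T measurable_compose_n[OF T]]) simp
  also have "\<dots> = M" using Suc inv by simp
  finally show ?case .
qed (simp add: distr_id2)

lemma translate_borel:
  fixes A :: "real set"
  assumes "A \<in> sets borel"
  shows "(\<lambda>x. x + d) ` A \<in> sets borel"
proof -
  have "(\<lambda>x. x + d) ` A = (\<lambda>x. x - d) -` A \<inter> space borel"
    by (force simp: image_iff)
  also have "\<dots> \<in> sets borel" using assms by (intro measurable_sets[of _ borel]) auto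
  finally show ?thesis .
qed

lemma measure_le_measure_image:
  assumes "finite_measure M" and f: "f \<in> M \<rightarrow>\<^sub>M M" "distr M M f = M"
    and A: "A \<subseteq> space M" "f ` A \<in> sets M"
  shows "measure M A \<le> measure M (f ` A)"
proof -
  have "measure M A \<le> measure M (f -` (f ` A) \<inter> space M)"
    using assms by (intro finite_measure.finite_measure_mono) (auto intro: measurable_sets)
  also have "\<dots> = measure (distr M M f) (f ` A)"
    using f(1) A(2) by (simp add: measure_distr)
  finally show ?thesis using f(2) by simp
qed

text \<open>Kac's bound: the floors of the tower are disjoint and, T preserving M, each floor
  has at least the measure of its base.\<close>

lemma rokhlin_tower_height_measure_le_1:
  fixes M :: "real measure"
  assumes M: "prob_space M" "sets M = sets (restrict_space borel S)"
    and T: "T \<in> M \<rightarrow>\<^sub>M M" and inv: "distr M M T = M"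
    and tower: "rokhlin_tower T I E h L" and "finite L"
    and base: "\<And>a. a \<in> L \<Longrightarrow> I a \<in> sets borel" "\<And>a. a \<in> L \<Longrightarrow> I a \<subseteq> S"
  shows "(\<Sum>a\<in>L. h a * measure M (I a)) \<le> 1"
proof -
  interpret prob_space M by (rule M(1))
  define K where "K = Sigma L (\<lambda>a. {..<h a})"
  define floor where "floor p = (T^^snd p) ` I (fst p)" for p
  have space: "space M = S"
    using sets_eq_imp_space_eq[OF M(2)] by (simp add: space_restrict_space)
  have floor_sets: "floor (a, q) \<in> sets M" if a: "a \<in> L" and q: "q < h a" for a q
  proof -
    obtain d where "\<forall>x\<in>I a. (T^^q) x = x + d"
      using rokhlin_tower_translation[OF tower a] q by fastforce
    then have "floor (a, q) = (\<lambda>x. x + d) ` I a" by (auto simp: floor_def image_iff)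
    then have "floor (a, q) \<in> sets borel" using translate_borel base(1)[OF that(1)] by simp
    moreover have "floor (a, q) \<subseteq> S"
      using measurable_space[OF measurable_compose_n[OF T]] base(2)[OF that(1)] space
      by (auto simp: floor_def)
    ultimately show ?thesis using M(2) by (auto simp: sets_restrict_space)
  qed
  have base_le_floor: "measure M (I a) \<le> measure M (floor (a, q))" if "a \<in> L" "q < h a" for a q
    using measure_le_measure_image[OF finite_measure_axioms measurable_compose_n[OF T]
        distr_funpow_invariant[OF T inv]] floor_sets[OF that] base(2)[OF that(1)] space
    by (simp add: floor_def)
  have "disjoint_family_on floor K"
    unfolding disjoint_family_on_def
  proof (intro ballI impI)
    fix p p' assume "p \<in> K" "p' \<in> K" "p \<noteq> p'"
    then show "floor p \<inter> floor p' = {}"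
      using rokhlin_tower_injective[OF tower] by (fastforce simp: K_def floor_def)
  qed
  then have "measure M (\<Union>p\<in>K. floor p) = (\<Sum>p\<in>K. measure M (floor p))"
    using floor_sets \<open>finite L\<close> by (intro finite_measure_finite_Union) (auto simp: K_def)
  also have "\<dots> = (\<Sum>a\<in>L. \<Sum>q<h a. measure M (floor (a, q)))"
    using \<open>finite L\<close> by (simp add: K_def sum.Sigma)
  also have "\<dots> \<ge> (\<Sum>a\<in>L. h a * measure M (I a))"
  proof (rule sum_mono)
    fix a assume "a \<in> L"
    have "h a * measure M (I a) = (\<Sum>q<h a. measure M (I a))" by simp
    also have "\<dots> \<le> (\<Sum>q<h a. measure M (floor (a, q)))"
      using base_le_floor[OF \<open>a \<in> L\<close>] by (intro sum_mono) simp
    finally show "h a * measure M (I a) \<le> (\<Sum>q<h a. measure M (floor (a, q)))" .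
  qed
  finally show ?thesis using prob_le_1[of "\<Union>p\<in>K. floor p"] by linarith
qed

definition valid_state :: "nat set \<Rightarrow> rstate \<Rightarrow> bool" where
  "valid_state L s \<longleftrightarrow> (case s of (tp, bt, lam) \<Rightarrow>
     distinct tp \<and> distinct bt \<and> set tp = L \<and> set bt = L \<and> (\<forall>a\<in>L. lam a > 0))"

definition state_iet :: "rstate \<Rightarrow> real \<Rightarrow> real" where
  "state_iet s = (case s of (tp, bt, lam) \<Rightarrow> iet tp bt lam)"

lemma start_last_add:
  "distinct xs \<Longrightarrow> xs \<noteq> [] \<Longrightarrow> start xs lam (last xs) + lam (last xs) = sum_list (map lam xs)"
  by (induction xs) auto

lemma start_last_add_eq:
  assumes "valid_state L (tp, bt, lam)" "tp \<noteq> []"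
  shows "start tp lam (last tp) + lam (last tp) = start bt lam (last bt) + lam (last bt)"
proof -
  have "bt \<noteq> []" "distinct tp" "distinct bt" "set tp = set bt"
    using assms by (auto simp: valid_state_def)
  then show ?thesis
    using assms(2) by (simp add: start_last_add sum_list_distinct_conv_sum_set)
qed

lemma rauzy_step_top_starts:
  fixes tp bt :: "nat list" and lam :: "nat \<Rightarrow> real"
  defines "al \<equiv> last tp" and "be \<equiv> last bt"
  defines "bt' \<equiv> ins_after al be (butlast bt)" and "lam' \<equiv> lam(al := lam al - lam be)"
  assumes valid: "valid_state L (tp, bt, lam)" and "tp \<noteq> []" and longer: "lam be < lam al"
  shows "valid_state L (tp, bt', lam')" and "al \<in> L" and "be \<in> L"
    and "\<And>a. a \<in> L \<Longrightarrow> start tp lam' a = start tp lam a"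
    and "\<And>a. a \<in> L \<Longrightarrow> a \<noteq> be \<Longrightarrow> start bt' lam' a = start bt lam a"
    and "start bt' lam' be = start bt lam al + lam al - lam be"
proof -
  have "bt \<noteq> []" using valid \<open>tp \<noteq> []\<close> by (auto simp: valid_state_def)
  then obtain A B where tp: "tp = A @ [al]" and bt: "bt = B @ [be]"
    using \<open>tp \<noteq> []\<close> unfolding al_def be_def by (metis append_butlast_last_id)
  have dA: "distinct (A @ [al])" and dB: "distinct (B @ [be])" and L: "L = set (A @ [al])" "L = set (B @ [be])"
    and pos: "\<And>a. a \<in> L \<Longrightarrow> lam a > 0"
    using valid by (auto simp: valid_state_def tp bt)
  have "al \<noteq> be" using longer by auto
  then have al_B: "al \<in> set B" using L by auto
  show "al \<in> L" "be \<in> L" using L by auto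
  have bt': "bt' = ins_after al be B" by (simp add: bt'_def bt)
  show "valid_state L (tp, bt', lam')"
    using valid dB al_B L pos longer
    by (auto simp: valid_state_def bt' lam'_def set_ins_after distinct_ins_after)
  show "start tp lam' a = start tp lam a" if "a \<in> L" for a
    using start_snoc_fun_upd[OF dA] that L by (simp add: tp lam'_def)
  show "start bt' lam' a = start bt lam a" if "a \<in> L" "a \<noteq> be" for a
  proof -
    have "a \<in> set B" using that L by auto
    then show ?thesis using start_ins_after_old[OF dB al_B] by (simp add: bt' bt lam'_def start_snoc)
  qed
  show "start bt' lam' be = start bt lam al + lam al - lam be"
    using start_ins_after_new[OF dB al_B] start_snoc[OF al_B] by (simp add: bt' bt lam'_def)
qed

lemma rauzy_step_top_stacking:
  fixes tp bt :: "nat list" and lam :: "nat \<Rightarrow> real"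
  defines "al \<equiv> last tp" and "be \<equiv> last bt"
  defines "bt' \<equiv> ins_after al be (butlast bt)" and "lam' \<equiv> lam(al := lam al - lam be)"
  assumes valid: "valid_state L (tp, bt, lam)" and "tp \<noteq> []" and longer: "lam be < lam al"
    and tower: "rokhlin_tower T (subint (tp, bt, lam)) (iet tp bt lam) h L"
  shows "tower_stacking T (subint (tp, bt, lam)) (subint (tp, bt', lam')) (iet tp bt lam) (iet tp bt' lam')
           h L be be al"
proof -
  let ?I = "subint (tp, bt, lam)" and ?I' = "subint (tp, bt', lam')"
  let ?E = "iet tp bt lam" and ?E' = "iet tp bt' lam'"
  note starts = rauzy_step_top_starts[OF valid \<open>tp \<noteq> []\<close> longer[unfolded al_def be_def],
      folded al_def be_def, folded bt'_def lam'_def]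
  note valid' = starts(1) and letters = starts(2,3) and top = starts(4) and bottom = starts(5)
    and bottom_be = starts(6)
  have "al \<noteq> be" using longer by auto
  have pos: "\<And>a. a \<in> L \<Longrightarrow> lam a > 0" using valid by (simp add: valid_state_def)
  have nonneg: "\<And>a. a \<in> set tp \<Longrightarrow> lam a \<ge> 0" "\<And>a. a \<in> set tp \<Longrightarrow> lam' a \<ge> 0"
    using valid valid' by (auto simp: valid_state_def less_imp_le)
  have ends: "start bt lam be = start tp lam al + lam al - lam be"
    using start_last_add_eq[OF valid \<open>tp \<noteq> []\<close>] by (simp add: al_def be_def)
  have E: "?E x = x + (start bt lam a - start tp lam a)" if "a \<in> L" "x \<in> ?I a" for a x
    using iet_on_subint[of tp a lam x bt] valid nonneg that by (auto simp: valid_state_def)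
  have E': "?E' x = x + (start bt' lam' a - start tp lam' a)" if "a \<in> L" "x \<in> ?I' a" for a x
    using iet_on_subint[of tp a lam' x bt'] valid nonneg that by (auto simp: valid_state_def)
  have I': "?I' a = ?I a" if "a \<in> L" "a \<noteq> al" for a
    using top that by (simp add: subint_eq lam'_def)
  have I'_al: "?I' al = {start tp lam al ..< start tp lam al + lam al - lam be}"
    using top letters by (simp add: subint_eq lam'_def add_diff_eq)
  have E_be: "?E x \<in> {start tp lam al + lam al - lam be ..< start tp lam al + lam al}" if "x \<in> ?I be" for x
    using E[OF letters(2) that] that ends by (simp add: subint_eq)
  have E_be_al: "?E x \<in> ?I al" if "x \<in> ?I be" for x
    using E_be[OF that] longer by (simp add: subint_eq)
  have I'_be: "?I' be = ?I be" using I' letters \<open>al \<noteq> be\<close> by simp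
  have disjoint: "?I a \<inter> ?I al = {}" if "a \<in> L" "a \<noteq> al" for a
    using subint_disjoint[of tp a al lam bt] valid nonneg that letters by (auto simp: valid_state_def)
  have sub: "?I' a \<subseteq> ?I a" if "a \<in> L" "a \<noteq> be" for a
    using I' I'_al that pos[OF letters(2)] by (cases "a = al") (auto simp: subint_eq)
  show "tower_stacking T ?I ?I' ?E ?E' h L be be al"
  proof
    show "?I' a \<subseteq> ?I a" if "a \<in> L" "a \<noteq> be" for a
      using sub that .
    show "?E ` ?I' be \<subseteq> ?I al"
      using E_be_al I'_be by auto
    show "?I' a \<inter> ?I' b = {}" if "a \<in> L" "b \<in> L" "a \<noteq> b" for a b
      using subint_disjoint[of tp a b lam' bt'] valid nonneg that by (auto simp: valid_state_def)
    show "?I' a \<inter> ?E ` ?I' be = {}" if "a \<in> L" for a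
    proof (cases "a = al")
      case True
      then show ?thesis using E_be I'_al I'_be by fastforce
    next
      case False
      then show ?thesis using E_be_al I'_be I'[OF that False] disjoint[OF that False] by blast
    qed
    show "?E' x = ?E x" if "a \<in> L" "a \<noteq> be" "x \<in> ?I' a" for a x
    proof -
      have "x \<in> ?I a" using sub[OF that(1,2)] that(3) by blast
      then show ?thesis using E[OF that(1)] E'[OF that(1,3)] bottom[OF that(1,2)] top[OF that(1)] by simp
    qed
    show "?E' x = ?E (?E x)" if "x \<in> ?I' be" for x
    proof -
      have x: "x \<in> ?I be" using I'_be that by simp
      have "?E (?E x) = ?E x + (start bt lam al - start tp lam al)" using E[OF letters(1) E_be_al[OF x]] .
      also have "\<dots> = x + (start bt' lam' be - start tp lam' be)"
        using E[OF letters(2) x] ends bottom_be top[OF letters(2)] by simp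
      finally show ?thesis using E'[OF letters(2) that] by simp
    qed
  qed (use tower letters I'_be in auto)
qed

lemma rauzy_step_bottom_starts:
  fixes tp bt :: "nat list" and lam :: "nat \<Rightarrow> real"
  defines "al \<equiv> last tp" and "be \<equiv> last bt"
  defines "tp' \<equiv> ins_after be al (butlast tp)" and "lam' \<equiv> lam(be := lam be - lam al)"
  assumes valid: "valid_state L (tp, bt, lam)" and "tp \<noteq> []" and longer: "lam al < lam be"
  shows "valid_state L (tp', bt, lam')" and "al \<in> L" and "be \<in> L"
    and "\<And>a. a \<in> L \<Longrightarrow> start bt lam' a = start bt lam a"
    and "\<And>a. a \<in> L \<Longrightarrow> a \<noteq> al \<Longrightarrow> start tp' lam' a = start tp lam a"
    and "start tp' lam' al = start tp lam be + lam be - lam al"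
proof -
  have "bt \<noteq> []" using valid \<open>tp \<noteq> []\<close> by (auto simp: valid_state_def)
  then obtain A B where tp: "tp = A @ [al]" and bt: "bt = B @ [be]"
    using \<open>tp \<noteq> []\<close> unfolding al_def be_def by (metis append_butlast_last_id)
  have dA: "distinct (A @ [al])" and dB: "distinct (B @ [be])" and L: "L = set (A @ [al])" "L = set (B @ [be])"
    and pos: "\<And>a. a \<in> L \<Longrightarrow> lam a > 0"
    using valid by (auto simp: valid_state_def tp bt)
  have "al \<noteq> be" using longer by auto
  then have be_A: "be \<in> set A" using L by auto
  show "al \<in> L" "be \<in> L" using L by auto
  have tp': "tp' = ins_after be al A" by (simp add: tp'_def tp)
  show "valid_state L (tp', bt, lam')"
    using valid dA be_A L pos longer
    by (auto simp: valid_state_def tp' lam'_def set_ins_after distinct_ins_after)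
  show "start bt lam' a = start bt lam a" if "a \<in> L" for a
    using start_snoc_fun_upd[OF dB, of a] that L(2) by (simp add: bt lam'_def)
  show "start tp' lam' a = start tp lam a" if "a \<in> L" "a \<noteq> al" for a
  proof -
    have "a \<in> set A" using that L by auto
    then show ?thesis using start_ins_after_old[OF dA be_A] by (simp add: tp' tp lam'_def start_snoc)
  qed
  show "start tp' lam' al = start tp lam be + lam be - lam al"
    using start_ins_after_new[OF dA be_A] start_snoc[OF be_A] by (simp add: tp' tp lam'_def)
qed

lemma rauzy_step_bottom_stacking:
  fixes tp bt :: "nat list" and lam :: "nat \<Rightarrow> real"
  defines "al \<equiv> last tp" and "be \<equiv> last bt"
  defines "tp' \<equiv> ins_after be al (butlast tp)" and "lam' \<equiv> lam(be := lam be - lam al)"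
  assumes valid: "valid_state L (tp, bt, lam)" and "tp \<noteq> []" and longer: "lam al < lam be"
    and tower: "rokhlin_tower T (subint (tp, bt, lam)) (iet tp bt lam) h L"
  shows "tower_stacking T (subint (tp, bt, lam)) (subint (tp', bt, lam')) (iet tp bt lam) (iet tp' bt lam')
           h L al be al"
proof -
  let ?I = "subint (tp, bt, lam)" and ?I' = "subint (tp', bt, lam')"
  let ?E = "iet tp bt lam" and ?E' = "iet tp' bt lam'"
  note starts = rauzy_step_bottom_starts[OF valid \<open>tp \<noteq> []\<close> longer[unfolded al_def be_def],
      folded al_def be_def, folded tp'_def lam'_def]
  note valid' = starts(1) and letters = starts(2,3) and bottom = starts(4) and top = starts(5)
    and top_al = starts(6)
  have "al \<noteq> be" using longer by auto
  have pos: "\<And>a. a \<in> L \<Longrightarrow> lam a > 0" using valid by (simp add: valid_state_def)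
  have nonneg: "\<And>a. a \<in> set tp \<Longrightarrow> lam a \<ge> 0" "\<And>a. a \<in> set tp' \<Longrightarrow> lam' a \<ge> 0"
    using valid valid' by (auto simp: valid_state_def less_imp_le)
  have ends: "start bt lam be = start tp lam al + lam al - lam be"
    using start_last_add_eq[OF valid \<open>tp \<noteq> []\<close>] by (simp add: al_def be_def)
  have E: "?E x = x + (start bt lam a - start tp lam a)" if "a \<in> L" "x \<in> ?I a" for a x
    using iet_on_subint[of tp a lam x bt] valid nonneg that by (auto simp: valid_state_def)
  have E': "?E' x = x + (start bt lam' a - start tp' lam' a)" if "a \<in> L" "x \<in> ?I' a" for a x
    using iet_on_subint[of tp' a lam' x bt] valid' nonneg that by (auto simp: valid_state_def)
  have sub: "?I' a \<subseteq> ?I a" if "a \<in> L" "a \<noteq> al" for a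
    using top[OF that] that pos[OF letters(1)] by (cases "a = be") (auto simp: subint_eq lam'_def)
  have I'_al: "?I' al = {start tp lam be + lam be - lam al ..< start tp lam be + lam be}"
    using top_al \<open>al \<noteq> be\<close> by (simp add: subint_eq lam'_def)
  have sub_al: "?I' al \<subseteq> ?I be"
    using I'_al pos[OF letters(1)] longer by (auto simp: subint_eq)
  have E_al: "?E x \<in> ?I al" if "x \<in> ?I' al" for x
  proof -
    have "?E x = x + (start bt lam be - start tp lam be)" using E[OF letters(2)] sub_al that by blast
    then show ?thesis using that[unfolded I'_al] ends by (simp add: subint_eq)
  qed
  have disjoint: "?I a \<inter> ?I b = {}" if "a \<in> L" "b \<in> L" "a \<noteq> b" for a b
    using subint_disjoint[of tp a b lam bt] valid nonneg that by (auto simp: valid_state_def)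
  show "tower_stacking T ?I ?I' ?E ?E' h L al be al"
  proof
    show "?I' a \<inter> ?I' b = {}" if "a \<in> L" "b \<in> L" "a \<noteq> b" for a b
      using subint_disjoint[of tp' a b lam' bt] valid' nonneg that by (auto simp: valid_state_def)
    show "?I' a \<inter> ?E ` ?I' al = {}" if "a \<in> L" for a
    proof -
      have "?I' a \<subseteq> ?I (if a = al then be else a)" using sub sub_al that by auto
      moreover have "?I (if a = al then be else a) \<inter> ?I al = {}"
        using disjoint that letters \<open>al \<noteq> be\<close> by auto
      ultimately show ?thesis using E_al by blast
    qed
    show "?E' x = ?E x" if "a \<in> L" "a \<noteq> al" "x \<in> ?I' a" for a x
    proof -
      have "x \<in> ?I a" using sub[OF that(1,2)] that(3) by blast
      then show ?thesis using E[OF that(1)] E'[OF that(1,3)] bottom[OF that(1)] top[OF that(1,2)] by simp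
    qed
    show "?E' x = ?E (?E x)" if "x \<in> ?I' al" for x
    proof -
      have x: "x \<in> ?I be" using sub_al that by blast
      have "?E (?E x) = ?E x + (start bt lam al - start tp lam al)" using E[OF letters(1) E_al[OF that]] .
      also have "\<dots> = x + (start bt lam' al - start tp' lam' al)"
        using E[OF letters(2) x] ends top_al bottom[OF letters(1)] by simp
      finally show ?thesis using E'[OF letters(1) that] by simp
    qed
  qed (use tower letters sub sub_al E_al in auto)
qed

definition height_step :: "rstate \<Rightarrow> (nat \<Rightarrow> nat) \<Rightarrow> nat \<Rightarrow> nat" where
  "height_step s h = (case s of (tp, bt, lam) \<Rightarrow>
     if lam (last bt) < lam (last tp) then h(last bt := h (last bt) + h (last tp))
     else if lam (last tp) < lam (last bt) then h(last tp := h (last tp) + h (last bt))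
     else h)"

fun heights :: "rstate \<Rightarrow> nat \<Rightarrow> nat \<Rightarrow> nat" where
  "heights s0 0 = (\<lambda>_. 1)"
| "heights s0 (Suc N) = height_step ((rauzy_step ^^ N) s0) (heights s0 N)"

lemma heights_ge_1: "heights s0 N a \<ge> 1"
  by (induction N arbitrary: a) (auto simp: height_step_def split: prod.split intro: trans_le_add1)

lemma rauzy_step_tower:
  assumes valid: "valid_state L s" and "L \<noteq> {}" and type: "rauzy_type s \<noteq> None"
    and tower: "rokhlin_tower T (subint s) (state_iet s) h L"
  shows "valid_state L (rauzy_step s)"
    and "rokhlin_tower T (subint (rauzy_step s)) (state_iet (rauzy_step s)) (height_step s h) L"
proof -
  obtain tp bt lam where s: "s = (tp, bt, lam)" by (metis prod_cases3)
  have "tp \<noteq> []" using valid \<open>L \<noteq> {}\<close> by (auto simp: s valid_state_def)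
  have tower': "rokhlin_tower T (subint (tp, bt, lam)) (iet tp bt lam) h L"
    using tower by (simp add: s state_iet_def)
  consider "lam (last bt) < lam (last tp)" | "lam (last tp) < lam (last bt)"
    using type by (force simp: s rauzy_type_def Let_def split: if_splits)
  then have "valid_state L (rauzy_step s) \<and>
    rokhlin_tower T (subint (rauzy_step s)) (state_iet (rauzy_step s)) (height_step s h) L"
  proof cases
    case 1
    then show ?thesis
      using rauzy_step_top_starts(1)[OF valid[unfolded s] \<open>tp \<noteq> []\<close> 1]
        tower_stacking.stacked[OF rauzy_step_top_stacking[OF valid[unfolded s] \<open>tp \<noteq> []\<close> 1 tower']]
      by (simp add: s rauzy_step_def height_step_def state_iet_def Let_def)
  next
    case 2
    then show ?thesis
      using rauzy_step_bottom_starts(1)[OF valid[unfolded s] \<open>tp \<noteq> []\<close> 2]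
        tower_stacking.stacked[OF rauzy_step_bottom_stacking[OF valid[unfolded s] \<open>tp \<noteq> []\<close> 2 tower']]
      by (simp add: s rauzy_step_def height_step_def state_iet_def Let_def add.commute)
  qed
  then show "valid_state L (rauzy_step s)"
    and "rokhlin_tower T (subint (rauzy_step s)) (state_iet (rauzy_step s)) (height_step s h) L"
    by auto
qed

lemma rokhlin_tower_initial:
  assumes "valid_state L (tp, bt, lam)"
  shows "rokhlin_tower (iet tp bt lam) (subint (tp, bt, lam)) (iet tp bt lam) (\<lambda>_. 1) L"
proof -
  have valid: "distinct tp" "set tp = L" "\<And>a. a \<in> set tp \<Longrightarrow> lam a \<ge> 0"
    using assms by (auto simp: valid_state_def less_imp_le)
  have "\<exists>d. \<forall>x\<in>subint (tp, bt, lam) a. (iet tp bt lam ^^ q) x = x + d" if "a \<in> L" "q \<le> 1" for a q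
    using that iet_on_subint[of tp a lam] valid by (cases q) auto
  moreover have "inj_on (\<lambda>(a, q, x). (iet tp bt lam ^^ q) x) (SIGMA a:L. {..<1} \<times> subint (tp, bt, lam) a)"
    using subint_disjoint[of tp _ _ lam bt] valid by (auto intro!: inj_onI; blast)
  ultimately show ?thesis by (simp add: rokhlin_tower_def)
qed

lemma rauzy_induction_tower:
  assumes valid: "valid_state L (tp, bt, lam)" and "L \<noteq> {}"
    and types: "\<And>N. rauzy_type ((rauzy_step ^^ N) (tp, bt, lam)) \<noteq> None"
  shows "valid_state L ((rauzy_step ^^ N) (tp, bt, lam)) \<and>
    rokhlin_tower (iet tp bt lam) (subint ((rauzy_step ^^ N) (tp, bt, lam)))
      (state_iet ((rauzy_step ^^ N) (tp, bt, lam))) (heights (tp, bt, lam) N) L"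
proof (induction N)
  case 0
  then show ?case using valid rokhlin_tower_initial[OF valid] by (simp add: state_iet_def)
next
  case (Suc N)
  then show ?case
    using rauzy_step_tower[OF _ \<open>L \<noteq> {}\<close> types, where T = "iet tp bt lam" and h = "heights (tp, bt, lam) N"]
    by simp
qed

lemma rauzy_step_lengths_le:
  assumes "valid_state L s" "L \<noteq> {}"
  shows "snd (snd (rauzy_step s)) a \<le> snd (snd s) a"
proof -
  obtain tp bt lam where s: "s = (tp, bt, lam)" by (metis prod_cases3)
  then have "tp \<noteq> []" "bt \<noteq> []" using assms by (auto simp: valid_state_def)
  then have "last tp \<in> L" "last bt \<in> L" using assms by (auto simp: s valid_state_def)
  then show ?thesis using assms by (auto simp: s valid_state_def rauzy_step_def Let_def)
qed

lemma valid_state_subint_subset: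
  assumes "valid_state L (tp, bt, lam)" "a \<in> L"
  shows "subint (tp, bt, lam) a \<subseteq> {0..<sum lam L}"
proof -
  have nonneg: "\<And>x. x \<in> set tp \<Longrightarrow> lam x \<ge> 0" using assms by (auto simp: valid_state_def less_imp_le)
  have "start tp lam a + lam a \<le> sum lam L"
    using start_add_le_sum_list[of tp lam a] nonneg assms by (auto simp: valid_state_def sum_list_distinct_conv_sum_set)
  then show ?thesis using start_nonneg[of tp lam a] nonneg by (auto simp: subint_eq)
qed

definition swapped_pairs :: "nat \<Rightarrow> nat \<Rightarrow> nat list" where
  "swapped_pairs lo hi = concat (map (\<lambda>l. [2*l+1, 2*l]) [lo..<hi])"

lemma swapped_pairs_Suc_hi: "lo \<le> hi \<Longrightarrow> swapped_pairs lo (Suc hi) = swapped_pairs lo hi @ [2*hi+1, 2*hi]"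
  unfolding swapped_pairs_def by simp

lemma swapped_pairs_Suc_lo: "lo < hi \<Longrightarrow> swapped_pairs lo hi = [2*lo+1, 2*lo] @ swapped_pairs (Suc lo) hi"
  unfolding swapped_pairs_def by (simp add: upt_conv_Cons)

lemma swapped_pairs_empty: "hi \<le> lo \<Longrightarrow> swapped_pairs lo hi = []"
  unfolding swapped_pairs_def by simp

lemma set_swapped_pairs: "set (swapped_pairs lo hi) = {2*lo..<2*hi}"
proof (induction hi)
  case (Suc hi)
  then show ?case by (cases "lo \<le> hi") (auto simp: swapped_pairs_Suc_hi swapped_pairs_empty)
qed (simp add: swapped_pairs_def)

lemma distinct_swapped_pairs: "distinct (swapped_pairs lo hi)"
proof (induction hi)
  case (Suc hi)
  then show ?case
    by (cases "lo \<le> hi") (auto simp: swapped_pairs_Suc_hi swapped_pairs_empty set_swapped_pairs)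
qed (simp add: swapped_pairs_def)

lemma pi_bot_eq: "pi_bot n = n # swapped_pairs 1 (n div 2) @ [1]"
  by (simp add: pi_bot_def swapped_pairs_def)

lemma valid_state_pi:
  assumes "even n" "2 \<le> n" "\<And>t. t \<in> {1..n} \<Longrightarrow> lam t > 0"
  shows "valid_state {1..n} (pi_top n, pi_bot n, lam)"
proof -
  have "2 * (n div 2) = n" using assms by simp
  then show ?thesis
    using assms distinct_swapped_pairs[of 1 "n div 2"] set_swapped_pairs[of 1 "n div 2"]
    by (auto simp: valid_state_def pi_top_def pi_bot_eq)
qed

type_synonym rows_and_heights = "nat list \<times> nat list \<times> (nat \<Rightarrow> nat)"

text \<open>A Rauzy step of known type acting on the rows and on the heights only; needing no lengths,
  it lets the block gamma be evaluated symbolically.\<close>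

definition rauzy_move :: "nat \<Rightarrow> rows_and_heights \<Rightarrow> rows_and_heights" where
  "rauzy_move t s = (case s of (tp, bt, h) \<Rightarrow>
     if t = 0 then (tp, ins_after (last tp) (last bt) (butlast bt), h(last bt := h (last bt) + h (last tp)))
     else (ins_after (last bt) (last tp) (butlast tp), bt, h(last tp := h (last tp) + h (last bt))))"

text \<open>The top row after k steps of type 1 against the last bottom letter m: its last k letters
  have moved, in order, right behind m.\<close>

definition cycled_top :: "nat \<Rightarrow> nat \<Rightarrow> nat \<Rightarrow> nat list" where
  "cycled_top n m k = [1..<m+1] @ [n-k+1..<n+1] @ [m+1..<n-k+1]"

lemma cycled_top_0: "m \<le> n \<Longrightarrow> cycled_top n m 0 = [1..<n+1]"
proof -
  assume "m \<le> n"
  have "[1..<(m+1)+(n-m)] = [1..<m+1] @ [m+1..<(m+1)+(n-m)]" by (rule upt_add_eq_append) simp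
  moreover have "(m+1)+(n-m) = n+1" using \<open>m \<le> n\<close> by simp
  ultimately have "[1..<n+1] = [1..<m+1] @ [m+1..<n+1]" by metis
  then show ?thesis unfolding cycled_top_def by simp
qed

lemma rauzy_move_cycled_top:
  assumes m: "1 \<le> m" and k: "k < n - m" and lb: "last bt = m"
  shows "rauzy_move 1 (cycled_top n m k, bt, h) = (cycled_top n m (Suc k), bt, h(n-k := h (n-k) + h m))"
proof -
  have e1: "[m+1..<n-k+1] = [m+1..<n-k] @ [n-k]" using k by simp
  have e2: "[1..<m+1] = [1..<m] @ [m]" using m by simp
  have t: "cycled_top n m k = ([1..<m] @ m # [n-k+1..<n+1] @ [m+1..<n-k]) @ [n-k]"
    unfolding cycled_top_def e1 e2 by simp
  have "ins_after m (n-k) ([1..<m] @ m # [n-k+1..<n+1] @ [m+1..<n-k]) = [1..<m] @ m # (n-k) # [n-k+1..<n+1] @ [m+1..<n-k]"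
    by (rule ins_after_append) simp
  also have "\<dots> = cycled_top n m (Suc k)"
  proof -
    have "n - Suc k + 1 = n - k" using k by simp
    moreover have "[n-k..<n+1] = (n-k) # [n-k+1..<n+1]" using upt_conv_Cons[of "n-k" "n+1"] k by simp
    ultimately show ?thesis unfolding cycled_top_def e2 by (simp del: upt_Suc)
  qed
  finally have ia: "ins_after m (n-k) ([1..<m] @ m # [n-k+1..<n+1] @ [m+1..<n-k]) = cycled_top n m (Suc k)" .
  have l1: "last (cycled_top n m k) = n-k" and l2: "butlast (cycled_top n m k) = [1..<m] @ m # [n-k+1..<n+1] @ [m+1..<n-k]"
    unfolding t by (rule last_snoc, rule butlast_snoc)
  show ?thesis unfolding rauzy_move_def using lb ia l1 l2 by simp
qed

lemma fold_moves_cycled_top: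
  assumes m: "1 \<le> m" "m < n" and lb: "last bt = m"
  shows "k \<le> n - m \<Longrightarrow> fold rauzy_move (replicate k 1) (cycled_top n m 0, bt, h)
    = (cycled_top n m k, bt, \<lambda>s. if n - k < s \<and> s \<le> n then h s + h m else h s)"
proof (induction k)
  case 0 then show ?case by (simp add: fun_eq_iff)
next
  case (Suc k)
  have r: "replicate (Suc k) (1::nat) = replicate k 1 @ [1]" by (simp add: replicate_append_same)
  have kk: "k < n - m" using Suc.prems by simp
  have "fold rauzy_move (replicate (Suc k) 1) (cycled_top n m 0, bt, h)
      = rauzy_move 1 (cycled_top n m k, bt, \<lambda>s. if n - k < s \<and> s \<le> n then h s + h m else h s)"
    unfolding r using Suc.IH kk by simp
  also have "\<dots> = (cycled_top n m (Suc k), bt, \<lambda>s. if n - Suc k < s \<and> s \<le> n then h s + h m else h s)"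
    unfolding rauzy_move_cycled_top[OF m(1) kk lb] using kk by (auto simp: fun_eq_iff)
  finally show ?case .
qed

lemma fold_moves_top_longer:
  assumes z: "Suc m \<notin> set Z" and lt: "last tp = Suc m"
  shows "fold rauzy_move (replicate k 0) (tp, Z @ [Suc m, m], h) = (tp, Z @ [Suc m, m], h(m := h m + k * h (Suc m)))"
proof (induction k)
  case 0 then show ?case by simp
next
  case (Suc k)
  have r: "replicate (Suc k) (0::nat) = replicate k 0 @ [0]" by (simp add: replicate_append_same)
  have bl: "butlast (Z @ [Suc m, m]) = Z @ [Suc m]" by (induction Z) auto
  have ia: "ins_after (Suc m) m (Z @ [Suc m]) = Z @ [Suc m, m]" using ins_after_append[OF z, of m "[]"] by simp
  show ?case unfolding r fold_append comp_apply Suc.IH unfolding rauzy_move_def using lt bl ia by (auto simp: fun_eq_iff)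
qed

definition gdot_heights :: "nat \<Rightarrow> nat \<Rightarrow> nat \<Rightarrow> (nat \<Rightarrow> nat) \<Rightarrow> nat \<Rightarrow> nat" where
  "gdot_heights n m a h s =
     (if s = Suc m then h (Suc m) + (h m + a * h (Suc m)) + (h n + h m)
      else if s = m then h m + a * h (Suc m) + (h n + h m)
      else if Suc m < s \<and> s \<le> n then h s + h m
      else h s)"

lemma fold_gdot:
  assumes m: "1 \<le> m" "Suc m < n" and Y: "Suc m \<notin> set Y"
  shows "fold rauzy_move (gdot n m a) ([1..<n+1], n # Y @ [Suc m, m], h)
    = ([1..<n+1], n # Suc m # m # Y, gdot_heights n m a h)"
proof -
  define bt0 where "bt0 = n # Y @ [Suc m, m]"
  define h1 where "h1 = (\<lambda>s. if Suc m < s \<and> s \<le> n then h s + h m else h s)"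
  define h2 where "h2 = h1(m := h1 m + a * h1 (Suc m))"
  define h3 where "h3 = h2(Suc m := h2 (Suc m) + h2 m)"
  define h4 where "h4 = h3(m := h3 m + h3 n)"
  have lb: "last bt0 = m" unfolding bt0_def by simp
  have k1: "n - (n - 1 - m) = Suc m" using m by simp
  have cycle: "fold rauzy_move (replicate (n-1-m) 1) ([1..<n+1], bt0, h) = (cycled_top n m (n-1-m), bt0, h1)"
  proof -
    have "fold rauzy_move (replicate (n-1-m) 1) (cycled_top n m 0, bt0, h)
        = (cycled_top n m (n-1-m), bt0, \<lambda>s. if n - (n-1-m) < s \<and> s \<le> n then h s + h m else h s)"
      by (rule fold_moves_cycled_top[OF m(1) _ lb]) (use m in simp_all)
    moreover have "cycled_top n m 0 = [1..<n+1]" using cycled_top_0[of m n] m by simp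
    ultimately show ?thesis unfolding h1_def k1 by simp
  qed
  have tl: "cycled_top n m (n-1-m) = ([1..<m+1] @ [m+2..<n+1]) @ [Suc m]"
    unfolding cycled_top_def using m k1 by simp
  have top_longer: "fold rauzy_move (replicate a 0) (cycled_top n m (n-1-m), bt0, h1) = (cycled_top n m (n-1-m), bt0, h2)"
    unfolding bt0_def h2_def
    using fold_moves_top_longer[where m=m and Z="n # Y" and tp="cycled_top n m (n-1-m)" and k=a and h=h1] Y m tl
    by simp
  have cycle_closed: "rauzy_move 1 (cycled_top n m (n-1-m), bt0, h2) = ([1..<n+1], bt0, h3)"
  proof -
    have "rauzy_move 1 (cycled_top n m (n-1-m), bt0, h2)
        = (cycled_top n m (Suc (n-1-m)), bt0, h2(n - (n-1-m) := h2 (n - (n-1-m)) + h2 m))"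
      using rauzy_move_cycled_top[OF m(1) _ lb, where k="n-1-m" and h=h2] m by simp
    moreover have "cycled_top n m (Suc (n-1-m)) = [1..<n+1]"
    proof -
      have "Suc (n-1-m) = n - m" using m by simp
      then have "cycled_top n m (Suc (n-1-m)) = cycled_top n m 0" using m unfolding cycled_top_def by simp
      then show ?thesis using cycled_top_0[of m n] m by simp
    qed
    ultimately show ?thesis unfolding h3_def k1 by simp
  qed
  have first_zero: "rauzy_move 0 ([1..<n+1], bt0, h3) = ([1..<n+1], n # m # Y @ [Suc m], h4)"
  proof -
    have "last [1..<n+1] = n" using m by simp
    moreover have "butlast bt0 = n # Y @ [Suc m]" unfolding bt0_def by (induction Y) auto
    ultimately show ?thesis unfolding rauzy_move_def h4_def using lb by simp
  qed
  have second_zero: "rauzy_move 0 ([1..<n+1], n # m # Y @ [Suc m], h4) = ([1..<n+1], n # Suc m # m # Y, gdot_heights n m a h)"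
  proof -
    have "last [1..<n+1] = n" using m by simp
    moreover have "butlast (n # m # Y @ [Suc m]) = n # m # Y" by simp
    moreover have "last (n # m # Y @ [Suc m]) = Suc m" by simp
    moreover have "h4(Suc m := h4 (Suc m) + h4 n) = gdot_heights n m a h"
      using m by (auto simp: fun_eq_iff gdot_heights_def h4_def h3_def h2_def h1_def)
    ultimately show ?thesis unfolding rauzy_move_def by simp
  qed
  have "gdot n m a = replicate (n-1-m) 1 @ replicate a 0 @ [1] @ [0] @ [0]" unfolding gdot_def by simp
  then have "fold rauzy_move (gdot n m a) ([1..<n+1], bt0, h) = rauzy_move 0 (rauzy_move 0 (rauzy_move 1
      (fold rauzy_move (replicate a 0) (fold rauzy_move (replicate (n-1-m) 1) ([1..<n+1], bt0, h)))))"
    by simp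
  also have "\<dots> = ([1..<n+1], n # Suc m # m # Y, gdot_heights n m a h)"
    unfolding cycle top_longer cycle_closed first_zero second_zero ..
  finally show ?thesis unfolding bt0_def .
qed

text \<open>Bottom row and heights after the first step of gamma and its blocks gdot for
  m = n - 2, n - 4, ..., 2 j.\<close>

definition bottom_row_at :: "nat \<Rightarrow> nat \<Rightarrow> nat list" where
  "bottom_row_at n j = n # swapped_pairs j (n div 2) @ [1] @ swapped_pairs 1 j"

definition heights_at :: "nat \<Rightarrow> nat \<Rightarrow> (nat \<Rightarrow> nat) \<Rightarrow> nat \<Rightarrow> nat \<Rightarrow> nat" where
  "heights_at n a H j s = (if s = 1 then H 1 + H n
     else if s = n then H n + (\<Sum>l\<in>{j..<n div 2}. H (2*l))
     else if 2*j \<le> s \<and> s < n then (if even s then H s + a * H (Suc s) else H (s-1) + (a+1) * H s)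
         + H n + (\<Sum>l\<in>{j..<n div 2}. H (2*l))
     else H s)"

lemma gdot_heights_at:
  assumes n: "even n" and j: "1 \<le> j" "j < n div 2"
  shows "gdot_heights n (2*j) a (heights_at n a H (Suc j)) = heights_at n a H j"
proof
  fix s
  define m where "m = 2*j"
  define S where "S = (\<Sum>l\<in>{Suc j..<n div 2}. H (2*l))"
  have n2: "n = 2 * (n div 2)" using n by simp
  have m1: "1 \<le> m" "Suc m < n" using j n2 unfolding m_def by linarith+
  have Sj: "(\<Sum>l\<in>{j..<n div 2}. H (2*l)) = H m + S" unfolding S_def m_def using j by (simp add: sum.atLeast_Suc_lessThan)
  have v1: "heights_at n a H (Suc j) m = H m" using m1 unfolding heights_at_def m_def by auto
  have v2: "heights_at n a H (Suc j) (Suc m) = H (Suc m)" using m1 n unfolding heights_at_def m_def by auto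
  have v3: "heights_at n a H (Suc j) n = H n + S" using m1 unfolding heights_at_def S_def by auto
  have ev: "even m" unfolding m_def by simp
  show "gdot_heights n (2*j) a (heights_at n a H (Suc j)) s = heights_at n a H j s"
    unfolding m_def[symmetric] gdot_heights_def v1 v2 v3
    using m1 ev n Sj unfolding heights_at_def S_def m_def by (auto simp: algebra_simps)
qed

lemma fold_gdots:
  assumes n: "even n" "4 \<le> n"
  shows "t \<le> n div 2 - 1 \<Longrightarrow> fold rauzy_move (concat (map (\<lambda>i. gdot n (n - 2*i) a) [1..<Suc t]))
      ([1..<n+1], bottom_row_at n (n div 2), heights_at n a H (n div 2))
    = ([1..<n+1], bottom_row_at n (n div 2 - t), heights_at n a H (n div 2 - t))"
proof (induction t)
  case 0 then show ?case by simp
next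
  case (Suc t)
  define j where "j = n div 2 - Suc t"
  have n2: "n = 2 * (n div 2)" using n by simp
  have j1: "1 \<le> j" "j < n div 2" using Suc.prems n unfolding j_def by auto
  have e: "n div 2 - t = Suc j" using Suc.prems unfolding j_def by simp
  have mm: "n - 2 * Suc t = 2 * j" unfolding j_def using n2 by simp
  have bst: "bottom_row_at n (Suc j) = n # (swapped_pairs (Suc j) (n div 2) @ [1] @ swapped_pairs 1 j) @ [Suc (2*j), 2*j]"
    unfolding bottom_row_at_def using swapped_pairs_Suc_hi[of 1 j] j1 by simp
  have bst2: "n # Suc (2*j) # 2*j # (swapped_pairs (Suc j) (n div 2) @ [1] @ swapped_pairs 1 j) = bottom_row_at n j"
    unfolding bottom_row_at_def using swapped_pairs_Suc_lo[of j "n div 2"] j1 by simp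
  have notin: "Suc (2*j) \<notin> set (swapped_pairs (Suc j) (n div 2) @ [1] @ swapped_pairs 1 j)"
    using j1 by (auto simp: set_swapped_pairs)
  have ml: "1 \<le> 2*j" "Suc (2*j) < n" using j1 n2 by linarith+
  have "[1..<Suc (Suc t)] = [1..<Suc t] @ [Suc t]" by simp
  then have "fold rauzy_move (concat (map (\<lambda>i. gdot n (n - 2*i) a) [1..<Suc (Suc t)]))
      ([1..<n+1], bottom_row_at n (n div 2), heights_at n a H (n div 2))
      = fold rauzy_move (gdot n (2*j) a) ([1..<n+1], bottom_row_at n (Suc j), heights_at n a H (Suc j))"
    using Suc.IH Suc.prems e mm by simp
  also have "\<dots> = ([1..<n+1], bottom_row_at n j, heights_at n a H j)"
    unfolding bst fold_gdot[OF ml notin] bst2 gdot_heights_at[OF n(1) j1] ..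
  finally show ?case unfolding j_def .
qed

lemma fold_moves_rounds:
  assumes "2 \<le> n" "last bt = 1"
  shows "fold rauzy_move (replicate (c * (n-1)) 1) ([1..<n+1], bt, h)
    = ([1..<n+1], bt, \<lambda>s. if 1 < s \<and> s \<le> n then h s + c * h 1 else h s)"
proof (induction c arbitrary: h)
  case 0 then show ?case by (simp add: fun_eq_iff)
next
  case (Suc c)
  have t0: "cycled_top n 1 0 = [1..<n+1]" using cycled_top_0[of 1 n] assms by simp
  have t1: "cycled_top n 1 (n-1) = [1..<n+1]" unfolding cycled_top_def using upt_conv_Cons[of "Suc 0" n] assms by simp
  have one: "fold rauzy_move (replicate (n-1) 1) ([1..<n+1], bt, h)
      = ([1..<n+1], bt, \<lambda>s. if 1 < s \<and> s \<le> n then h s + h 1 else h s)"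
    using fold_moves_cycled_top[OF _ _ assms(2), where k="n-1" and h=h and n=n] t0 t1 assms by simp
  have r: "replicate (Suc c * (n-1)) (1::nat) = replicate (n-1) 1 @ replicate (c * (n-1)) 1" by (simp add: replicate_add)
  have "fold rauzy_move (replicate (Suc c * (n-1)) 1) ([1..<n+1], bt, h)
     = fold rauzy_move (replicate (c * (n-1)) 1) ([1..<n+1], bt, \<lambda>s. if 1 < s \<and> s \<le> n then h s + h 1 else h s)"
    unfolding r fold_append comp_apply one ..
  also have "\<dots> = ([1..<n+1], bt, \<lambda>s. if 1 < s \<and> s \<le> n then h s + Suc c * h 1 else h s)"
    unfolding Suc.IH by (auto simp: fun_eq_iff)
  finally show ?case .
qed

definition gamma_heights :: "nat \<Rightarrow> nat \<Rightarrow> nat \<Rightarrow> (nat \<Rightarrow> nat) \<Rightarrow> nat \<Rightarrow> nat" where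
  "gamma_heights n a c H s =
     (if 1 < s \<and> s \<le> n then heights_at n a H 1 s + c * heights_at n a H 1 1 else heights_at n a H 1 s)"

lemma fold_gamma:
  assumes n: "even n" "4 \<le> n"
  shows "fold rauzy_move (gamma n a c) (pi_top n, pi_bot n, H) = (pi_top n, pi_bot n, gamma_heights n a c H)"
proof -
  have n2: "n = 2 * (n div 2)" using n by simp
  have init: "rauzy_move 0 ([1..<n+1], pi_bot n, H) = ([1..<n+1], bottom_row_at n (n div 2), heights_at n a H (n div 2))"
  proof -
    have "last [1..<n+1] = n" using n by simp
    moreover have "pi_bot n = (n # swapped_pairs 1 (n div 2)) @ [1]" by (simp add: pi_bot_eq)
    moreover have "bottom_row_at n (n div 2) = n # 1 # swapped_pairs 1 (n div 2)"
      unfolding bottom_row_at_def by (simp add: swapped_pairs_empty)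
    moreover have "H(1 := H 1 + H n) = heights_at n a H (n div 2)" using n unfolding heights_at_def by (auto simp: fun_eq_iff)
    ultimately show ?thesis unfolding rauzy_move_def by simp
  qed
  have ng: "[1..<n div 2] = [1..<Suc (n div 2 - 1)]" using n by simp
  have gr: "fold rauzy_move (concat (map (\<lambda>i. gdot n (n - 2*i) a) [1..<n div 2]))
      ([1..<n+1], bottom_row_at n (n div 2), heights_at n a H (n div 2))
      = ([1..<n+1], pi_bot n, heights_at n a H 1)"
  proof -
    have "n div 2 - (n div 2 - 1) = 1" using n by simp
    moreover have "bottom_row_at n 1 = pi_bot n" unfolding bottom_row_at_def pi_bot_eq by (simp add: swapped_pairs_empty)
    ultimately show ?thesis unfolding ng using fold_gdots[OF n, of "n div 2 - 1" a H] by simp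
  qed
  have lb: "last (pi_bot n) = 1" by (simp add: pi_bot_eq)
  have "gamma n a c = [0] @ concat (map (\<lambda>i. gdot n (n - 2*i) a) [1..<n div 2]) @ replicate (c * (n - 1)) 1"
    unfolding gamma_def ..
  then have "fold rauzy_move (gamma n a c) (pi_top n, pi_bot n, H)
      = fold rauzy_move (replicate (c * (n - 1)) 1) ([1..<n+1], pi_bot n, heights_at n a H 1)"
    unfolding pi_top_def using init gr by simp
  also have "\<dots> = ([1..<n+1], pi_bot n,
      \<lambda>s. if 1 < s \<and> s \<le> n then heights_at n a H 1 s + c * heights_at n a H 1 1 else heights_at n a H 1 s)"
    by (rule fold_moves_rounds[OF _ lb]) (use n in simp)
  also have "\<dots> = (pi_top n, pi_bot n, gamma_heights n a c H)"
    unfolding pi_top_def by (simp add: gamma_heights_def[abs_def])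
  finally show ?thesis .
qed

lemma Theta_middle_row_mult:
  assumes "2 \<le> r" "r \<le> n - 1" "2 \<le> s" "4 \<le> n"
  shows "real (H r) * Theta n a c r s = (if even r then real (H r) else 0)
     + (if r = s then (if even s then real (H s) else (real a + 1) * real (H s)) else 0)
     + (if r = s - 1 then (if odd s then real (H r) else 0) else 0)
     + (if r = s + 1 then (if even s then real a * real (H r) else 0) else 0)"
proof -
  have r1: "r \<noteq> 1" "r \<noteq> n" "s \<noteq> 1" using assms by auto
  show ?thesis
  proof (cases "even r")
    case True
    then have "odd (r+1)" by simp
    moreover have "r \<noteq> s + 1 \<or> odd s" using True by auto
    ultimately show ?thesis using True r1 unfolding Theta_def
      by (cases "r = s"; cases "r = s - 1"; simp add: algebra_simps)
  next
    case False
    then have "r \<noteq> s - 1 \<or> even s" using assms by (cases "s = r + 1") auto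
    then show ?thesis using False r1 unfolding Theta_def
      by (cases "r = s"; cases "r = s + 1"; auto simp: algebra_simps)
  qed
qed

lemma sum_middle_even:
  fixes n :: nat and H :: "nat \<Rightarrow> nat"
  assumes "even n" "2 \<le> n"
  shows "(\<Sum>r\<in>{2..n-1}. if even r then real (H r) else 0) = (\<Sum>l\<in>{1..<n div 2}. real (H (2*l)))"
proof -
  have img: "(\<lambda>l. 2*l) ` {1..<n div 2} = {r\<in>{2..n-1}. even r}"
  proof
    show "(\<lambda>l. 2*l) ` {1..<n div 2} \<subseteq> {r\<in>{2..n-1}. even r}" using assms by auto
    show "{r\<in>{2..n-1}. even r} \<subseteq> (\<lambda>l. 2*l) ` {1..<n div 2}"
    proof
      fix r assume r: "r \<in> {r\<in>{2..n-1}. even r}"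
      then obtain l where l: "r = 2*l" by (auto elim: evenE)
      then have "l \<in> {1..<n div 2}" using r assms by auto
      then show "r \<in> (\<lambda>l. 2*l) ` {1..<n div 2}" using l by blast
    qed
  qed
  have "(\<Sum>r\<in>{2..n-1}. if even r then real (H r) else 0) = (\<Sum>r\<in>{r\<in>{2..n-1}. even r}. real (H r))"
    by (rule sum.inter_filter[symmetric]) simp
  also have "\<dots> = (\<Sum>r\<in>(\<lambda>l. 2*l) ` {1..<n div 2}. real (H r))" unfolding img ..
  also have "\<dots> = (\<Sum>l\<in>{1..<n div 2}. real (H (2*l)))" by (subst sum.reindex) (auto simp: inj_on_def)
  finally show ?thesis .
qed

lemma sum_middle_rows_Theta:
  fixes n :: nat and H :: "nat \<Rightarrow> nat"
  assumes n: "even n" "4 \<le> n" and s: "2 \<le> s"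
  shows "(\<Sum>r\<in>{2..n-1}. real (H r) * Theta n a c r s) =
     (\<Sum>l\<in>{1..<n div 2}. real (H (2*l)))
     + (if s \<in> {2..n-1} then (if even s then real (H s) else (real a + 1) * real (H s)) else 0)
     + (if s - 1 \<in> {2..n-1} then (if odd s then real (H (s-1)) else 0) else 0)
     + (if s + 1 \<in> {2..n-1} then (if even s then real a * real (H (s+1)) else 0) else 0)"
proof -
  have n2: "(2::nat) \<le> n" using n by simp
  have "(\<Sum>r\<in>{2..n-1}. real (H r) * Theta n a c r s) =
       (\<Sum>r\<in>{2..n-1}. (if even r then real (H r) else 0)
     + (if r = s then (if even s then real (H s) else (real a + 1) * real (H s)) else 0)
     + (if r = s - 1 then (if odd s then real (H r) else 0) else 0)
     + (if r = s + 1 then (if even s then real a * real (H r) else 0) else 0))"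
    by (rule sum.cong) (use Theta_middle_row_mult[OF _ _ s n(2)] in auto)
  also have "\<dots> = (\<Sum>r\<in>{2..n-1}. (if even r then real (H r) else 0))
     + (\<Sum>r\<in>{2..n-1}. (if r = s then (if even s then real (H s) else (real a + 1) * real (H s)) else 0))
     + (\<Sum>r\<in>{2..n-1}. (if r = s - 1 then (if odd s then real (H r) else 0) else 0))
     + (\<Sum>r\<in>{2..n-1}. (if r = s + 1 then (if even s then real a * real (H r) else 0) else 0))"
    by (simp only: sum.distrib)
  also have "\<dots> = (\<Sum>l\<in>{1..<n div 2}. real (H (2*l)))
     + (if s \<in> {2..n-1} then (if even s then real (H s) else (real a + 1) * real (H s)) else 0)
     + (if s - 1 \<in> {2..n-1} then (if odd s then real (H (s-1)) else 0) else 0)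
     + (if s + 1 \<in> {2..n-1} then (if even s then real a * real (H (s+1)) else 0) else 0)"
    unfolding sum_middle_even[OF n(1) n2] by (simp only: sum.delta finite_atLeastAtMost)
  finally show ?thesis .
qed

lemma sum_atLeastAtMost_ends:
  fixes f :: "nat \<Rightarrow> real"
  assumes "2 \<le> n"
  shows "(\<Sum>r=1..n. f r) = f 1 + f n + (\<Sum>r\<in>{2..n-1}. f r)"
proof -
  have "{1..n} = insert 1 (insert n {2..n-1})" "1 \<notin> insert n {2..n-1}" "n \<notin> {2..n-1}"
    using assms by auto
  then show ?thesis by (simp add: add.assoc)
qed

lemma gamma_heights_Theta_first_column:
  assumes "4 \<le> n"
  shows "real (gamma_heights n a c H 1) = (\<Sum>r=1..n. real (H r) * Theta n a c r 1)"
proof -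
  have "Theta n a c r 1 = 0" if "r \<in> {2..n-1}" for r
    using that by (cases "r = 2") (auto simp: Theta_def)
  then show ?thesis
    using assms by (subst sum_atLeastAtMost_ends) (simp_all add: gamma_heights_def heights_at_def Theta_def)
qed

lemma gamma_heights_Theta_column:
  fixes H :: "nat \<Rightarrow> nat"
  assumes n: "even n" "4 \<le> n" and s: "2 \<le> s" "s \<le> n"
  shows "real (gamma_heights n a c H s) = (\<Sum>r=1..n. real (H r) * Theta n a c r s)"
proof -
  define S where "S = (\<Sum>l\<in>{1..<n div 2}. real (H (2*l)))"
  have Theta_ends: "Theta n a c 1 s = real c" "Theta n a c n s = real c + 1"
    using n s by (auto simp: Theta_def)
  have "real (gamma_heights n a c H s) = real c * (real (H 1) + real (H n)) + real (H n) + S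
      + (if s = n then 0 else if even s then real (H s) + real a * real (H (s+1))
         else real (H (s-1)) + (real a + 1) * real (H s))"
    using s by (auto simp: gamma_heights_def heights_at_def S_def algebra_simps)
  moreover have "(\<Sum>r=1..n. real (H r) * Theta n a c r s)
      = real (H 1) * real c + real (H n) * (real c + 1) + (\<Sum>r\<in>{2..n-1}. real (H r) * Theta n a c r s)"
    using n Theta_ends by (subst sum_atLeastAtMost_ends) simp_all
  moreover have "s + 1 \<le> n - 1" if "even s" "s \<noteq> n"
    using that s n by (metis add.commute add_le_imp_le_diff dvd_diff_nat even_add le_neq_implies_less
        less_eq_Suc_le odd_one plus_1_eq_Suc)
  moreover have "s \<noteq> 2" if "odd s" using that by auto
  ultimately show ?thesis
    using n s unfolding sum_middle_rows_Theta[OF n s(1)] S_def by (auto simp: algebra_simps)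
qed

lemma gamma_heights_Theta:
  fixes H :: "nat \<Rightarrow> nat"
  assumes "even n" "4 \<le> n" "s \<in> {1..n}"
  shows "real (gamma_heights n a c H s) = (\<Sum>r=1..n. real (H r) * Theta n a c r s)"
  using assms gamma_heights_Theta_first_column gamma_heights_Theta_column by (cases "s = 1") auto

lemma rauzy_step_move:
  assumes "rauzy_type s = Some t"
  shows "(fst (rauzy_step s), fst (snd (rauzy_step s)), height_step s h) = rauzy_move t (fst s, fst (snd s), h)"
  using assms
  by (cases s) (auto simp: rauzy_type_def rauzy_step_def height_step_def rauzy_move_def Let_def split: if_splits)

definition rows_heights :: "rstate \<Rightarrow> nat \<Rightarrow> rows_and_heights" where
  "rows_heights s0 N = (fst ((rauzy_step ^^ N) s0), fst (snd ((rauzy_step ^^ N) s0)), heights s0 N)"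

lemma rows_heights_fold:
  assumes "\<And>m. m < length g \<Longrightarrow> rauzy_type ((rauzy_step ^^ (N + m)) s0) = Some (g ! m)"
  shows "rows_heights s0 (N + length g) = fold rauzy_move g (rows_heights s0 N)"
  using assms
proof (induction g rule: rev_induct)
  case (snoc t g)
  then have "rauzy_type ((rauzy_step ^^ (N + length g)) s0) = Some t"
    by (metis length_append_singleton lessI nth_append_length)
  moreover have "rows_heights s0 (N + length g) = fold rauzy_move g (rows_heights s0 N)"
    using snoc by (simp add: nth_append)
  ultimately show ?case
    using rauzy_step_move[of _ t "heights s0 (N + length g)"] by (simp add: rows_heights_def)
qed (simp add: rows_heights_def)

lemma nsteps_0 [simp]: "nsteps n a c 0 = 0"
  by (simp add: nsteps_def)

lemma nsteps_Suc: "nsteps n a c (Suc k) = nsteps n a c k + length (gamma n (a (Suc k)) (c (Suc k)))"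
  by (simp add: nsteps_def)

lemma nsteps_decompose: "\<exists>k m. N = nsteps n a c k + m \<and> m < length (gamma n (a (Suc k)) (c (Suc k)))"
proof (induction N)
  case 0
  show ?case by (rule exI[of _ 0], rule exI[of _ 0]) (simp add: gamma_def)
next
  case (Suc N)
  then obtain k m where km: "N = nsteps n a c k + m" "m < length (gamma n (a (Suc k)) (c (Suc k)))"
    by blast
  show ?case
  proof (cases "Suc m < length (gamma n (a (Suc k)) (c (Suc k)))")
    case True
    then show ?thesis using km by (intro exI[of _ k] exI[of _ "Suc m"]) simp
  next
    case False
    then have "Suc N = nsteps n a c (Suc k) + 0" using km nsteps_Suc by simp
    then show ?thesis by (metis gamma_def length_append length_greater_0_conv list.distinct(1) append_is_Nil_conv)
  qed
qed

lemma thprod_column_sum_Suc: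
  "(\<Sum>r=1..n. thprod n f 0 (Suc k) r s) = (\<Sum>l=1..n. (\<Sum>r=1..n. thprod n f 0 k r l) * f (Suc k) l s)"
  by (simp add: matmul_def sum_distrib_right) (rule sum.swap)

lemma rauzy_induction_lengths_le:
  assumes "valid_state L (tp, bt, lam)" "L \<noteq> {}"
    and "\<And>N. rauzy_type ((rauzy_step ^^ N) (tp, bt, lam)) \<noteq> None"
  shows "snd (snd ((rauzy_step ^^ N) (tp, bt, lam))) a \<le> lam a"
proof (induction N)
  case (Suc N)
  then show ?case
    using rauzy_step_lengths_le[OF conjunct1[OF rauzy_induction_tower[OF assms, of N]] assms(2), of a]
    by simp
qed simp

lemma rows_heights_gamma_blocks:
  fixes n :: nat and lam :: "nat \<Rightarrow> real"
  defines "s0 \<equiv> (pi_top n, pi_bot n, lam)"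
  assumes n: "even n" "4 \<le> n"
    and path: "\<And>k m. m < length (gamma n (a (Suc k)) (c (Suc k))) \<Longrightarrow>
        rauzy_type ((rauzy_step ^^ (nsteps n a c k + m)) s0) = Some (gamma n (a (Suc k)) (c (Suc k)) ! m)"
  shows "rows_heights s0 (nsteps n a c k) = (pi_top n, pi_bot n, heights s0 (nsteps n a c k)) \<and>
    (\<forall>i\<in>{1..n}. real (heights s0 (nsteps n a c k) i) = (\<Sum>r=1..n. thprod n (\<lambda>l. Theta n (a l) (c l)) 0 k r i))"
proof (induction k)
  case 0
  then show ?case by (auto simp: rows_heights_def s0_def idmat_def)
next
  case (Suc k)
  define H where "H = heights s0 (nsteps n a c k)"
  have "rows_heights s0 (nsteps n a c (Suc k))
      = fold rauzy_move (gamma n (a (Suc k)) (c (Suc k))) (rows_heights s0 (nsteps n a c k))"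
    unfolding nsteps_Suc by (rule rows_heights_fold) (rule path)
  also have "\<dots> = (pi_top n, pi_bot n, gamma_heights n (a (Suc k)) (c (Suc k)) H)"
    using Suc.IH fold_gamma[OF n] by (simp add: H_def)
  finally have rows: "rows_heights s0 (nsteps n a c (Suc k)) = (pi_top n, pi_bot n, gamma_heights n (a (Suc k)) (c (Suc k)) H)" .
  have "real (gamma_heights n (a (Suc k)) (c (Suc k)) H i)
      = (\<Sum>r=1..n. thprod n (\<lambda>l. Theta n (a l) (c l)) 0 (Suc k) r i)" if "i \<in> {1..n}" for i
  proof -
    have "real (gamma_heights n (a (Suc k)) (c (Suc k)) H i)
        = (\<Sum>r=1..n. real (H r) * Theta n (a (Suc k)) (c (Suc k)) r i)"
      using gamma_heights_Theta[OF n that] .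
    also have "\<dots> = (\<Sum>r=1..n. (\<Sum>t=1..n. thprod n (\<lambda>l. Theta n (a l) (c l)) 0 k t r)
        * Theta n (a (Suc k)) (c (Suc k)) r i)"
      using Suc.IH by (intro sum.cong) (auto simp: H_def)
    finally show ?thesis by (simp only: thprod_column_sum_Suc)
  qed
  with rows show ?case by (simp add: rows_heights_def)
qed

lemma gamma_path_tower:
  fixes n :: nat and lam :: "nat \<Rightarrow> real"
  defines "s0 \<equiv> (pi_top n, pi_bot n, lam)"
  assumes n: "even n" "4 \<le> n"
    and lam_pos: "\<And>t. t \<in> {1..n} \<Longrightarrow> lam t > 0" and lam_sum: "(\<Sum>t=1..n. lam t) = 1"
    and path: "\<And>k m. m < length (gamma n (a (Suc k)) (c (Suc k))) \<Longrightarrow>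
        rauzy_type ((rauzy_step ^^ (nsteps n a c k + m)) s0) = Some (gamma n (a (Suc k)) (c (Suc k)) ! m)"
  shows "rokhlin_tower (iet (pi_top n) (pi_bot n) lam) (subint ((rauzy_step ^^ N) s0))
      (state_iet ((rauzy_step ^^ N) s0)) (heights s0 N) {1..n}"
    and "t \<in> {1..n} \<Longrightarrow> subint ((rauzy_step ^^ N) s0) t \<subseteq> {0..<1}"
proof -
  have valid0: "valid_state {1..n} (pi_top n, pi_bot n, lam)"
    using valid_state_pi n lam_pos by simp
  have "{1..n} \<noteq> {}" using n by simp
  have types: "rauzy_type ((rauzy_step ^^ N') (pi_top n, pi_bot n, lam)) \<noteq> None" for N'
  proof -
    obtain k m where "N' = nsteps n a c k + m" "m < length (gamma n (a (Suc k)) (c (Suc k)))"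
      using nsteps_decompose by blast
    then show ?thesis using path[of m k] by (simp add: s0_def)
  qed
  obtain tp bt lm where sN: "(rauzy_step ^^ N) s0 = (tp, bt, lm)" by (metis prod_cases3)
  note induction = rauzy_induction_tower[OF valid0 \<open>{1..n} \<noteq> {}\<close> types, of N]
    rauzy_induction_lengths_le[OF valid0 \<open>{1..n} \<noteq> {}\<close> types, of N]
  show "rokhlin_tower (iet (pi_top n) (pi_bot n) lam) (subint ((rauzy_step ^^ N) s0))
      (state_iet ((rauzy_step ^^ N) s0)) (heights s0 N) {1..n}"
    using induction(1) by (simp add: s0_def)
  have "sum lm {1..n} \<le> sum lam {1..n}"
    using induction(2) sN by (intro sum_mono) (simp add: s0_def)
  then show "subint ((rauzy_step ^^ N) s0) t \<subseteq> {0..<1}" if "t \<in> {1..n}"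
    using valid_state_subint_subset[of "{1..n}" tp bt lm t] induction(1) sN that lam_sum
    by (auto simp: s0_def)
qed

theorem mainTheorem14:
  fixes n p :: nat
    and a c :: "nat \<Rightarrow> nat"
    and lam :: "nat \<Rightarrow> real"
    and j :: nat
    and M :: "real measure"
  assumes n_ge: "n \<ge> 4" and n_even: "even n"
    and p_ge: "p \<ge> n + 1"
    and c1_pos: "c 1 > 0"
    and a_def: "\<And>k. k \<ge> 1 \<Longrightarrow> a k = p * c k"
    and c_rec: "\<And>k. k \<ge> 1 \<Longrightarrow> c (Suc k) = p^2 * c k"
    and lam_pos: "\<And>t. t \<in> {1..n} \<Longrightarrow> lam t > 0"
    and lam_sum: "(\<Sum>t=1..n. lam t) = 1"
    and path: "\<And>k m. m < length (gamma n (a (Suc k)) (c (Suc k))) \<Longrightarrow>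
        rauzy_type ((rauzy_step ^^ (nsteps n a c k + m)) (pi_top n, pi_bot n, lam))
          = Some (gamma n (a (Suc k)) (c (Suc k)) ! m)"
    and j_range: "j \<in> {1..n}"
    and M_sets: "sets M = sets (restrict_space borel {0..<(1::real)})"
    and M_prob: "prob_space M"
    and M_meas: "iet (pi_top n) (pi_bot n) lam \<in> M \<rightarrow>\<^sub>M M"
    and M_inv: "distr M M (iet (pi_top n) (pi_bot n) lam) = M"
    and M_lim: "\<And>k. \<exists>r>0. \<forall>t\<in>{1..n}.
        (\<lambda>m. r * (thprod n (\<lambda>l. Theta n (a l) (c l)) k m t j
                  / (\<Sum>s=1..n. thprod n (\<lambda>l. Theta n (a l) (c l)) k m s j)))
        \<longlonglongrightarrow> measure M (subint ((rauzy_step ^^ nsteps n a c k) (pi_top n, pi_bot n, lam)) t)"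
  shows "\<forall>k\<ge>1. \<forall>i\<in>{1..n}. i \<noteq> j \<longrightarrow>
      measure M (subint ((rauzy_step ^^ nsteps n a c k) (pi_top n, pi_bot n, lam)) i)
        \<le> 1 / (\<Sum>r=1..n. thprod n (\<lambda>l. Theta n (a l) (c l)) 0 k r i)"
proof (intro allI impI ballI)
  fix k i :: nat assume i: "i \<in> {1..n}"
  define s0 where "s0 = (pi_top n, pi_bot n, lam)"
  define N where "N = nsteps n a c k"
  note tower = gamma_path_tower[OF n_even n_ge lam_pos lam_sum path, where N = N, folded s0_def]
  have "(\<Sum>t=1..n. heights s0 N t * measure M (subint ((rauzy_step ^^ N) s0) t)) \<le> 1"
    using rokhlin_tower_height_measure_le_1[OF M_prob M_sets M_meas M_inv tower(1) _ subint_borel tower(2)]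
    by simp
  moreover have "heights s0 N i * measure M (subint ((rauzy_step ^^ N) s0) i)
      \<le> (\<Sum>t=1..n. heights s0 N t * measure M (subint ((rauzy_step ^^ N) s0) t))"
    using i by (intro member_le_sum) auto
  moreover have "real (heights s0 N i) = (\<Sum>r=1..n. thprod n (\<lambda>l. Theta n (a l) (c l)) 0 k r i)"
    using rows_heights_gamma_blocks[OF n_even n_ge path] i unfolding N_def s0_def by blast
  ultimately show "measure M (subint ((rauzy_step ^^ nsteps n a c k) (pi_top n, pi_bot n, lam)) i)
      \<le> 1 / (\<Sum>r=1..n. thprod n (\<lambda>l. Theta n (a l) (c l)) 0 k r i)"
    using heights_ge_1[of s0 N i] by (simp add: N_def s0_def pos_le_divide_eq mult.commute)
qed

end
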